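(* Let $n\ge 2$ and let $A=(a_{pq})\in\mathbb{R}^{n\times n}$ be the weighted adjacency matrix of a directed stem-bud network without self-loops, i.e., there is $y\in\{1,\dots,n-1\}$ such that $a_{pq}=0$ unless $(p,q)=(q+1,q)$ for some $q\in\{1,\dots,n-1\}$ or $(p,q)=(y,n)$ (this includes the directed line network, where also $a_{yn}=0$). Let $i_b\in\{1,\dots,n\}$, $b=e_{i_b}$, and let $T$ be a positive integer. Then the controllability Gramian $\mathcal{W}_{i_b}=\sum_{t=0}^{T-1}A^tbb^{\top}(A^t)^{\top}$ is a diagonal matrix.
   Context: $e_p$ denotes the $p$-th canonical unit vector in $\mathbb{R}^n$. In a directed stem-bud network the stem is the path $1\to2\to\cdots\to y$ and the bud is the cycle $y\to y+1\to\cdots\to n\to y$; the entry $a_{pq}$ is the weight of the edge $q\to p$. *)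

theory Defs
  imports Main "HOL-Analysis.Analysis"
begin

text \<open>n x n real matrices are represented as functions nat => nat => real,
  with indices ranging over {1..n} (entries outside are irrelevant).\<close>

definition mat_mult :: "nat \<Rightarrow> (nat \<Rightarrow> nat \<Rightarrow> real) \<Rightarrow> (nat \<Rightarrow> nat \<Rightarrow> real) \<Rightarrow> (nat \<Rightarrow> nat \<Rightarrow> real)" where
  "mat_mult n A B = (\<lambda>p q. \<Sum>k=1..n. A p k * B k q)"

definition mat_id :: "nat \<Rightarrow> nat \<Rightarrow> real" where
  "mat_id = (\<lambda>p q. if p = q then 1 else 0)"

fun mat_pow :: "nat \<Rightarrow> (nat \<Rightarrow> nat \<Rightarrow> real) \<Rightarrow> nat \<Rightarrow> (nat \<Rightarrow> nat \<Rightarrow> real)" where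
  "mat_pow n A 0 = mat_id"
| "mat_pow n A (Suc t) = mat_mult n (mat_pow n A t) A"

definition mat_transpose :: "(nat \<Rightarrow> nat \<Rightarrow> real) \<Rightarrow> (nat \<Rightarrow> nat \<Rightarrow> real)" where
  "mat_transpose A = (\<lambda>p q. A q p)"

definition unit_vec :: "nat \<Rightarrow> nat \<Rightarrow> real" where
  "unit_vec i = (\<lambda>p. if p = i then 1 else 0)"

definition outer :: "(nat \<Rightarrow> real) \<Rightarrow> (nat \<Rightarrow> real) \<Rightarrow> (nat \<Rightarrow> nat \<Rightarrow> real)" where
  "outer u v = (\<lambda>p q. u p * v q)"

definition ctrb_gramian :: "nat \<Rightarrow> (nat \<Rightarrow> nat \<Rightarrow> real) \<Rightarrow> (nat \<Rightarrow> real) \<Rightarrow> nat \<Rightarrow> (nat \<Rightarrow> nat \<Rightarrow> real)" where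
  "ctrb_gramian n A b T = (\<lambda>p q. \<Sum>t<T.
      mat_mult n (mat_mult n (mat_pow n A t) (outer b b)) (mat_transpose (mat_pow n A t)) p q)"

definition is_diagonal :: "nat \<Rightarrow> (nat \<Rightarrow> nat \<Rightarrow> real) \<Rightarrow> bool" where
  "is_diagonal n M \<longleftrightarrow> (\<forall>p\<in>{1..n}. \<forall>q\<in>{1..n}. p \<noteq> q \<longrightarrow> M p q = 0)"

definition stem_bud :: "nat \<Rightarrow> nat \<Rightarrow> (nat \<Rightarrow> nat \<Rightarrow> real) \<Rightarrow> bool" where
  "stem_bud n y A \<longleftrightarrow> y \<in> {1..n-1} \<and>
     (\<forall>p\<in>{1..n}. \<forall>q\<in>{1..n}. \<not> ((p = q + 1 \<and> q \<in> {1..n-1}) \<or> (p = y \<and> q = n)) \<longrightarrow> A p q = 0)"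

end

theory Submission
  imports Defs
begin

text \<open>Every column of a stem-bud adjacency matrix has at most one nonzero entry, and this
  property is preserved under matrix products, so it holds for every power A^t. Since
  b = e_ib, the t-th summand of the Gramian is the outer product of the column ib of A^t
  with itself, which is diagonal because that column has at most one nonzero entry.\<close>

definition one_entry_columns :: "nat \<Rightarrow> (nat \<Rightarrow> nat \<Rightarrow> real) \<Rightarrow> bool" where
  "one_entry_columns n M \<longleftrightarrow> (\<forall>q\<in>{1..n}. \<exists>r. \<forall>p\<in>{1..n}. p \<noteq> r \<longrightarrow> M p q = 0)"

lemma one_entry_columns_mat_id: "one_entry_columns n mat_id"
  unfolding one_entry_columns_def mat_id_def by auto

lemma mat_mult_single_support:
  assumes "r \<in> {1..n}" and "\<And>k. k \<in> {1..n} \<Longrightarrow> k \<noteq> r \<Longrightarrow> B k q = 0"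
  shows "mat_mult n A B p q = A p r * B r q"
  unfolding mat_mult_def using assms by (subst sum.remove[of _ r]) (auto intro: sum.neutral)

lemma one_entry_columns_mat_mult:
  assumes A: "one_entry_columns n A" and B: "one_entry_columns n B"
  shows "one_entry_columns n (mat_mult n A B)"
  unfolding one_entry_columns_def
proof
  fix q assume q: "q \<in> {1..n}"
  obtain r where r: "\<forall>k\<in>{1..n}. k \<noteq> r \<longrightarrow> B k q = 0"
    using B q unfolding one_entry_columns_def by blast
  show "\<exists>s. \<forall>p\<in>{1..n}. p \<noteq> s \<longrightarrow> mat_mult n A B p q = 0"
  proof (cases "r \<in> {1..n}")
    case True
    then obtain s where s: "\<forall>p\<in>{1..n}. p \<noteq> s \<longrightarrow> A p r = 0"
      using A unfolding one_entry_columns_def by blast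
    have "mat_mult n A B p q = A p r * B r q" for p
      using r by (intro mat_mult_single_support[OF True]) auto
    with s show ?thesis by auto
  next
    case False
    then have "mat_mult n A B p q = 0" for p
      using r unfolding mat_mult_def by (auto intro: sum.neutral)
    then show ?thesis by blast
  qed
qed

lemma one_entry_columns_mat_pow:
  "one_entry_columns n A \<Longrightarrow> one_entry_columns n (mat_pow n A t)"
  by (induction t) (simp_all add: one_entry_columns_mat_id one_entry_columns_mat_mult)

lemma stem_bud_one_entry_columns:
  assumes "stem_bud n y A"
  shows "one_entry_columns n A"
  unfolding one_entry_columns_def
proof
  fix q assume "q \<in> {1..n}"
  then show "\<exists>r. \<forall>p\<in>{1..n}. p \<noteq> r \<longrightarrow> A p q = 0"
    using assms unfolding stem_bud_def
    by (intro exI[of _ "if q < n then q + 1 else y"]) auto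
qed

lemma sum_mult_unit_vec:
  assumes "i \<in> {1..n}"
  shows "(\<Sum>k=1..n. f k * unit_vec i k) = f i"
  using assms by (simp add: unit_vec_def if_distrib cong: if_cong)

lemma mat_mult_outer_transpose:
  "mat_mult n (mat_mult n M (outer u v)) (mat_transpose N) =
     outer (\<lambda>p. \<Sum>k=1..n. M p k * u k) (\<lambda>q. \<Sum>k=1..n. N q k * v k)"
  unfolding mat_mult_def outer_def mat_transpose_def
  by (simp add: sum_distrib_left sum_distrib_right mult_ac)

lemma ctrb_gramian_unit_vec:
  assumes "i \<in> {1..n}"
  shows "ctrb_gramian n A (unit_vec i) T p q = (\<Sum>t<T. mat_pow n A t p i * mat_pow n A t q i)"
  unfolding ctrb_gramian_def mat_mult_outer_transpose
  unfolding outer_def sum_mult_unit_vec[OF assms] ..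

lemma is_diagonal_ctrb_gramian_unit_vec:
  assumes "one_entry_columns n A" and i: "i \<in> {1..n}"
  shows "is_diagonal n (ctrb_gramian n A (unit_vec i) T)"
  unfolding is_diagonal_def
proof (intro ballI impI)
  fix p q assume p: "p \<in> {1..n}" and q: "q \<in> {1..n}" and "p \<noteq> q"
  have "mat_pow n A t p i * mat_pow n A t q i = 0" for t
  proof -
    obtain r where "\<forall>p\<in>{1..n}. p \<noteq> r \<longrightarrow> mat_pow n A t p i = 0"
      using one_entry_columns_mat_pow[OF assms(1)] i unfolding one_entry_columns_def by blast
    with p q \<open>p \<noteq> q\<close> show ?thesis by (cases "p = r") auto
  qed
  then show "ctrb_gramian n A (unit_vec i) T p q = 0"
    unfolding ctrb_gramian_unit_vec[OF i] by (intro sum.neutral) blast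
qed

theorem proposition4p1:
  fixes n y ib T :: nat and A :: "nat \<Rightarrow> nat \<Rightarrow> real"
  assumes "n \<ge> 2"
    and "stem_bud n y A"
    and "ib \<in> {1..n}"
    and "T > 0"
  shows "is_diagonal n (ctrb_gramian n A (unit_vec ib) T)"
  using is_diagonal_ctrb_gramian_unit_vec[OF stem_bud_one_entry_columns[OF assms(2)] assms(3)] .

end
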